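(* Let $bTL_n(q)$ be the quotient of $bH_n(q)$ by the two-sided ideal generated by the Steinberg elements $z_{i,j}=e_ie_j(1+qz_i+qz_j+q^2z_iz_j+q^2z_jz_i+q^3z_iz_jz_i)$, $|i-j|=1$, and put $d_i=q^{-1}e_i+z_i$. Then $bTL_n(q)$ is presented by generators $e_1,\ldots,e_{n-1}$ and $d_1,\ldots,d_{n-1}$ subject to: $e_i^2=e_i$, $e_ie_j=e_je_i$; $d_i^2=(q+q^{-1})d_i$; $d_id_jd_i=e_jd_ie_j$ for $|i-j|=1$; $d_id_j=d_jd_i$ for $|i-j|>1$; $d_ie_i=d_i$; $d_ie_j=e_jd_i$ for all $i,j$.
   Context: $\mathbb{S}=\mathbb{C}[q,q^{-1}]$. The tied--boxed Hecke algebra $bH_n(q)$ is the $\mathbb{S}$--algebra presented by generators $e_1,\dots,e_{n-1}$, $z_1,\dots,z_{n-1}$ and relations: $e_i^2=e_i$, $e_ie_j=e_je_i$; $z_iz_jz_i=z_jz_iz_j$ if $|i-j|=1$, $z_iz_j=z_jz_i$ if $|i-j|>1$; $e_iz_i=z_i$; $e_iz_j=z_je_i$; $z_i^2=e_i+(q-q^{-1})z_i$. *)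

theory Defs
  imports Complex_Main
begin

text \<open>An S-algebra, S = C[q,q^-1], is a ring A together with a ring homomorphism
  S -> Z(A); equivalently a ring homomorphism c : C -> A with central image
  together with a central unit q (with inverse qi) of A.\<close>
definition S_algebra :: "(complex \<Rightarrow> 'a::ring_1) \<Rightarrow> 'a \<Rightarrow> 'a \<Rightarrow> bool" where
  "S_algebra c q qi \<longleftrightarrow>
     c 1 = 1 \<and> (\<forall>x y. c (x + y) = c x + c y) \<and> (\<forall>x y. c (x * y) = c x * c y) \<and>
     (\<forall>x a. c x * a = a * c x) \<and>
     (\<forall>a. q * a = a * q) \<and> q * qi = 1 \<and> qi * q = 1"

definition adj :: "nat \<Rightarrow> nat \<Rightarrow> bool" where
  "adj i j \<longleftrightarrow> i = j + 1 \<or> j = i + 1"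

definition far :: "nat \<Rightarrow> nat \<Rightarrow> bool" where
  "far i j \<longleftrightarrow> i + 1 < j \<or> j + 1 < i"

definition bH_rel :: "'a::ring_1 \<Rightarrow> 'a \<Rightarrow> nat \<Rightarrow> (nat \<Rightarrow> 'a) \<Rightarrow> (nat \<Rightarrow> 'a) \<Rightarrow> bool" where
  "bH_rel q qi n e z \<longleftrightarrow>
     (\<forall>i\<in>{1..<n}. e i * e i = e i) \<and>
     (\<forall>i\<in>{1..<n}. \<forall>j\<in>{1..<n}. e i * e j = e j * e i) \<and>
     (\<forall>i\<in>{1..<n}. \<forall>j\<in>{1..<n}. adj i j \<longrightarrow> z i * z j * z i = z j * z i * z j) \<and>
     (\<forall>i\<in>{1..<n}. \<forall>j\<in>{1..<n}. far i j \<longrightarrow> z i * z j = z j * z i) \<and>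
     (\<forall>i\<in>{1..<n}. e i * z i = z i) \<and>
     (\<forall>i\<in>{1..<n}. \<forall>j\<in>{1..<n}. e i * z j = z j * e i) \<and>
     (\<forall>i\<in>{1..<n}. z i * z i = e i + (q - qi) * z i)"

definition steinberg :: "'a::ring_1 \<Rightarrow> (nat \<Rightarrow> 'a) \<Rightarrow> (nat \<Rightarrow> 'a) \<Rightarrow> nat \<Rightarrow> nat \<Rightarrow> 'a" where
  "steinberg q e z i j = e i * e j *
     (1 + q * z i + q * z j + q^2 * (z i * z j) + q^2 * (z j * z i) + q^3 * (z i * z j * z i))"

definition bTL_rel :: "'a::ring_1 \<Rightarrow> 'a \<Rightarrow> nat \<Rightarrow> (nat \<Rightarrow> 'a) \<Rightarrow> (nat \<Rightarrow> 'a) \<Rightarrow> bool" where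
  "bTL_rel q qi n e z \<longleftrightarrow> bH_rel q qi n e z \<and>
     (\<forall>i\<in>{1..<n}. \<forall>j\<in>{1..<n}. adj i j \<longrightarrow> steinberg q e z i j = 0)"

definition bTL_d_rel :: "'a::ring_1 \<Rightarrow> 'a \<Rightarrow> nat \<Rightarrow> (nat \<Rightarrow> 'a) \<Rightarrow> (nat \<Rightarrow> 'a) \<Rightarrow> bool" where
  "bTL_d_rel q qi n e d \<longleftrightarrow>
     (\<forall>i\<in>{1..<n}. e i * e i = e i) \<and>
     (\<forall>i\<in>{1..<n}. \<forall>j\<in>{1..<n}. e i * e j = e j * e i) \<and>
     (\<forall>i\<in>{1..<n}. d i * d i = (q + qi) * d i) \<and>
     (\<forall>i\<in>{1..<n}. \<forall>j\<in>{1..<n}. adj i j \<longrightarrow> d i * d j * d i = e j * d i * e j) \<and>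
     (\<forall>i\<in>{1..<n}. \<forall>j\<in>{1..<n}. far i j \<longrightarrow> d i * d j = d j * d i) \<and>
     (\<forall>i\<in>{1..<n}. d i * e i = d i) \<and>
     (\<forall>i\<in>{1..<n}. \<forall>j\<in>{1..<n}. d i * e j = e j * d i)"

end

theory Submission
  imports Defs
begin

(* With z_i = d_i - q^-1 e_i, each relation of bH_n(q) other than the braid relation corresponds
   to one of the new relations: e_j commutes with z_i iff it commutes with d_i; given that,
   e_i z_i = z_i and z_i^2 = e_i + (q - q^-1) z_i amount to d_i e_i = d_i and
   d_i^2 = (q + q^-1) d_i; and far commutation of the z's is far commutation of the d's.
   For adjacent i, j the Steinberg element equals q^3 (d_i d_j d_i - e_j d_i e_j), so it vanishes
   iff d_i d_j d_i = e_j d_i e_j. Finally z_i z_j z_i - (d_i d_j d_i - e_j d_i e_j) is symmetric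
   in i and j, so the braid relation of the z's follows from the cubic relations of the d's. *)

lemma mult_assoc_extend: "a * b = c \<Longrightarrow> a * (b * x) = c * (x::'a::semigroup_mult)"
  by (simp add: mult.assoc [symmetric])

locale central_unit =
  fixes q a :: "'a::ring_1"
  assumes right_inverse: "q * a = 1" and left_inverse: "a * q = 1"
    and central: "x * q = q * x"
begin

lemma inverse_central: "x * a = a * x"
proof -
  have "x * a = a * (q * x) * a" by (simp add: left_inverse mult.assoc [symmetric])
  also have "\<dots> = a * x * (q * a)" by (simp add: central [symmetric] mult.assoc)
  finally show ?thesis by (simp add: right_inverse)
qed

lemma cancel_left: "q * (a * x) = x" "a * (q * x) = x"
  by (simp_all add: mult_assoc_extend right_inverse left_inverse)

lemma scalar_left_commute: "x * (q * y) = q * (x * y)" "x * (a * y) = a * (x * y)"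
  by (simp_all add: mult.assoc [symmetric] central inverse_central)

lemma power_mult_eq_0_iff: "q ^ k * x = 0 \<longleftrightarrow> x = 0"
proof
  have "a ^ k * q ^ k = 1"
  proof (induction k)
    case (Suc k)
    then show ?case
      unfolding power_Suc2 [of a] power_Suc [of q] by (simp add: mult.assoc cancel_left)
  qed simp
  then have "x = a ^ k * (q ^ k * x)" by (simp add: mult.assoc [symmetric])
  then show "q ^ k * x = 0 \<Longrightarrow> x = 0" by simp
qed simp

lemma shifted_commute_iff:
  assumes "e * f = f * e"
  shows "(a * e + z) * f = f * (a * e + z) \<longleftrightarrow> f * z = z * f"
  using assms by (auto simp: algebra_simps inverse_central [of f] scalar_left_commute(2) [of f])

lemma shifted_quadratic_iff:
  assumes idem: "e * e = e" and commute: "e * z = z * e"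
  shows "e * z = z \<and> z * z = e + (q - a) * z \<longleftrightarrow>
    (a * e + z) * (a * e + z) = (q + a) * (a * e + z) \<and> (a * e + z) * e = a * e + z"
    (is "?L \<longleftrightarrow> ?R")
proof
  assume ?L
  then show ?R
    using assms by (simp add: algebra_simps inverse_central [of e] inverse_central [of z]
        scalar_left_commute(2) [of e] scalar_left_commute(2) [of z] cancel_left right_inverse)
next
  assume R: ?R
  then have "z * e = z"
    using idem by (simp add: algebra_simps scalar_left_commute(2) [of e])
  with R show ?L
    using assms by (simp add: algebra_simps inverse_central [of e] inverse_central [of z]
        scalar_left_commute(2) [of e] scalar_left_commute(2) [of z] cancel_left right_inverse)
qed

lemma shifted_far_commute_iff:
  assumes "e * f = f * e" "z * e = e * z" "z * f = f * z" "w * e = e * w" "w * f = f * w"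
  shows "(a * e + z) * (a * f + w) = (a * f + w) * (a * e + z) \<longleftrightarrow> z * w = w * z"
  using assms by (simp add: algebra_simps inverse_central [of e] inverse_central [of f]
      inverse_central [of z] inverse_central [of w] scalar_left_commute(2) [of e]
      scalar_left_commute(2) [of f] scalar_left_commute(2) [of z] scalar_left_commute(2) [of w])

end

locale d_pair = central_unit +
  fixes ei ej di dj :: "'a::ring_1"
  assumes ei_idem: "ei * ei = ei" and ej_idem: "ej * ej = ej"
    and e_commute: "ei * ej = ej * ei"
    and di_quadratic: "di * di = (q + a) * di" and dj_quadratic: "dj * dj = (q + a) * dj"
    and di_absorb: "di * ei = di" and dj_absorb: "dj * ej = dj"
    and ei_di: "ei * di = di * ei" and ej_di: "ej * di = di * ej"
    and ei_dj: "ei * dj = dj * ei" and ej_dj: "ej * dj = dj * ej"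
begin

lemma swap: "d_pair q a ej ei dj di"
  by unfold_locales (simp_all add: right_inverse left_inverse central ei_idem ej_idem e_commute
      di_quadratic dj_quadratic di_absorb dj_absorb ei_di ej_di ei_dj ej_dj)

(* Oriented towards the normal form of words: all d's left of all e's, and e_i before e_j. *)
lemma reorder_rules:
  "ej * ei = ei * ej" "ei * di = di" "ej * dj = dj" "ej * di = di * ej" "ei * dj = dj * ei"
  by (simp_all add: e_commute ei_di ej_dj ej_di ei_dj di_absorb dj_absorb)

lemma absorb_rules:
  "dj * (ei * ej) = dj * ei" "dj * (di * ej) = dj * di" "di * (dj * ei) = di * dj"
  by (metis e_commute dj_absorb mult.assoc, metis ej_di dj_absorb mult.assoc,
      metis ei_dj di_absorb mult.assoc)

lemmas word_simps = ei_idem ej_idem di_quadratic dj_quadratic di_absorb dj_absorb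
  reorder_rules absorb_rules
  ei_idem [THEN mult_assoc_extend] ej_idem [THEN mult_assoc_extend]
  di_quadratic [THEN mult_assoc_extend] dj_quadratic [THEN mult_assoc_extend]
  di_absorb [THEN mult_assoc_extend] dj_absorb [THEN mult_assoc_extend]
  reorder_rules [THEN mult_assoc_extend]

lemmas scalar_simps = right_inverse left_inverse cancel_left
  central [of ei] central [of ej] central [of di] central [of dj]
  inverse_central [of ei] inverse_central [of ej] inverse_central [of di] inverse_central [of dj]
  scalar_left_commute [of ei] scalar_left_commute [of ej]
  scalar_left_commute [of di] scalar_left_commute [of dj]

lemma braid_word_expansion:
  "(di - a * ei) * (dj - a * ej) * (di - a * ei) =
     di * dj * di - ej * di * ej - a * (di * dj + dj * di) + a^2 * (di * ej + dj * ei)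
     - a^3 * (ei * ej)"
  unfolding power2_eq_square power3_eq_cube by (simp add: algebra_simps word_simps scalar_simps)

(* With w = q z = q d - e the bracket is (1 + w_i)(1 + w_j)(1 + w_i) - w_i (1 + w_i), and
   e_i e_j (1 + w_i) = q d_i e_j, d_i e_j (1 + w_j) = q d_i d_j, d_i d_j (1 + w_i) = q d_i d_j d_i,
   w_i (1 + w_i) = q^3 d_i. *)
lemma steinberg_expansion:
  "ei * ej * (1 + q * (di - a * ei) + q * (dj - a * ej)
     + q^2 * ((di - a * ei) * (dj - a * ej)) + q^2 * ((dj - a * ej) * (di - a * ei))
     + q^3 * ((di - a * ei) * (dj - a * ej) * (di - a * ei)))
   = q^3 * (di * dj * di - ej * di * ej)"
  unfolding power2_eq_square power3_eq_cube by (simp add: algebra_simps word_simps scalar_simps)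

lemma braid_of_cubic_relations:
  assumes "di * dj * di = ej * di * ej" and "dj * di * dj = ei * dj * ei"
  shows "(di - a * ei) * (dj - a * ej) * (di - a * ei) =
    (dj - a * ej) * (di - a * ei) * (dj - a * ej)"
  unfolding braid_word_expansion d_pair.braid_word_expansion [OF swap] assms e_commute
  by (simp add: add.commute)

end

context central_unit
begin

lemma mixed_and_quadratic_relations_iff:
  assumes e_idem: "\<forall>i\<in>I. e i * e i = e i"
    and e_commute: "\<forall>i\<in>I. \<forall>j\<in>I. e i * e j = e j * e i"
  shows "(\<forall>i\<in>I. \<forall>j\<in>I. e i * z j = z j * e i) \<and> (\<forall>i\<in>I. e i * z i = z i) \<and>
      (\<forall>i\<in>I. z i * z i = e i + (q - a) * z i) \<longleftrightarrow>
    (\<forall>i\<in>I. \<forall>j\<in>I. (a * e i + z i) * e j = e j * (a * e i + z i)) \<and>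
      (\<forall>i\<in>I. (a * e i + z i) * (a * e i + z i) = (q + a) * (a * e i + z i)) \<and>
      (\<forall>i\<in>I. (a * e i + z i) * e i = a * e i + z i)"
proof -
  have "(a * e i + z i) * e j = e j * (a * e i + z i) \<longleftrightarrow> e j * z i = z i * e j"
    if "i \<in> I" "j \<in> I" for i j
    using shifted_commute_iff e_commute that by blast
  moreover have "e i * z i = z i \<and> z i * z i = e i + (q - a) * z i \<longleftrightarrow>
      (a * e i + z i) * (a * e i + z i) = (q + a) * (a * e i + z i) \<and>
      (a * e i + z i) * e i = a * e i + z i"
    if "i \<in> I" "e i * z i = z i * e i" for i
    using shifted_quadratic_iff e_idem that by blast
  ultimately show ?thesis by blast
qed

lemma far_commutation_iff:
  assumes e_commute: "\<forall>i\<in>I. \<forall>j\<in>I. e i * e j = e j * e i"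
    and mixed_commute: "\<forall>i\<in>I. \<forall>j\<in>I. e i * z j = z j * e i"
  shows "(\<forall>i\<in>I. \<forall>j\<in>I. far i j \<longrightarrow> z i * z j = z j * z i) \<longleftrightarrow>
    (\<forall>i\<in>I. \<forall>j\<in>I. far i j \<longrightarrow>
      (a * e i + z i) * (a * e j + z j) = (a * e j + z j) * (a * e i + z i))"
  using shifted_far_commute_iff e_commute mixed_commute by (metis (no_types, lifting))

lemma adjacent_relations_iff:
  fixes e z :: "nat \<Rightarrow> 'a"
  defines "d i \<equiv> a * e i + z i"
  assumes e_idem: "\<forall>i\<in>I. e i * e i = e i"
    and e_commute: "\<forall>i\<in>I. \<forall>j\<in>I. e i * e j = e j * e i"
    and mixed_commute: "\<forall>i\<in>I. \<forall>j\<in>I. d i * e j = e j * d i"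
    and d_quadratic: "\<forall>i\<in>I. d i * d i = (q + a) * d i"
    and d_absorb: "\<forall>i\<in>I. d i * e i = d i"
  shows "(\<forall>i\<in>I. \<forall>j\<in>I. adj i j \<longrightarrow> z i * z j * z i = z j * z i * z j) \<and>
      (\<forall>i\<in>I. \<forall>j\<in>I. adj i j \<longrightarrow> steinberg q e z i j = 0) \<longleftrightarrow>
    (\<forall>i\<in>I. \<forall>j\<in>I. adj i j \<longrightarrow> d i * d j * d i = e j * d i * e j)"
proof -
  have pair: "d_pair q a (e i) (e j) (d i) (d j)" if "i \<in> I" "j \<in> I" for i j
    using that e_idem e_commute mixed_commute d_quadratic d_absorb
    by unfold_locales (simp_all add: right_inverse left_inverse central)
  have adj_sym: "adj j i" if "adj i j" for i j
    using that by (auto simp: adj_def)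
  have z_eq: "z i = d i - a * e i" for i
    by (simp add: d_def)
  have steinberg: "steinberg q e z i j = 0 \<longleftrightarrow> d i * d j * d i = e j * d i * e j"
    if "i \<in> I" "j \<in> I" for i j
  proof -
    have "steinberg q e z i j = q^3 * (d i * d j * d i - e j * d i * e j)"
      unfolding steinberg_def z_eq by (rule d_pair.steinberg_expansion [OF pair [OF that]])
    then show ?thesis by (simp add: power_mult_eq_0_iff)
  qed
  have braid: "z i * z j * z i = z j * z i * z j"
    if "i \<in> I" "j \<in> I" "d i * d j * d i = e j * d i * e j" "d j * d i * d j = e i * d j * e i"
    for i j
    unfolding z_eq using d_pair.braid_of_cubic_relations [OF pair [OF that(1,2)] that(3,4)] .
  show ?thesis
    using steinberg braid adj_sym by blast
qed

end

lemma S_algebra_central_unit: "S_algebra c q qi \<Longrightarrow> central_unit q qi"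
  by unfold_locales (simp_all add: S_algebra_def)

theorem proposition6p1:
  fixes c :: "complex \<Rightarrow> 'a::ring_1" and q qi :: 'a and n :: nat
    and e z :: "nat \<Rightarrow> 'a"
  assumes "S_algebra c q qi"
  shows "bTL_rel q qi n e z \<longleftrightarrow> bTL_d_rel q qi n e (\<lambda>i. qi * e i + z i)"
proof -
  interpret central_unit q qi
    using assms by (rule S_algebra_central_unit)
  show ?thesis
    unfolding bTL_rel_def bH_rel_def bTL_d_rel_def
    using mixed_and_quadratic_relations_iff [of "{1..<n}" e z]
      far_commutation_iff [of "{1..<n}" e z] adjacent_relations_iff [of "{1..<n}" e z]
    by argo
qed

end
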